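(* Let $K\subset[0,1]$ be the triadic Cantor set. Then there exist functions $f,g\in C(K,\mathbb{R})$ such that \[ \overline{\dim}_B \operatorname{graph}(f+g)> \max\{\overline{\dim}_B \operatorname{graph}(f),\overline{\dim}_B \operatorname{graph}(g)\}. \]
   Context: $\operatorname{graph}(h)=\{(x,h(x)):x\in K\}\subset\mathbb{R}^2$ with the Euclidean metric. For a non-empty bounded set $X$ in a metric space, $N_n(X)$ is the maximal cardinality of a subset whose points are pairwise at distance $>2^{-n}$, and $\overline{\dim}_B X=\limsup_n \frac{\log N_n(X)}{n\log 2}$ (upper box dimension). *)

theory Defs
  imports "HOL-Analysis.Analysis" "HOL-Library.Liminf_Limsup"
begin

definition cantor_set :: "real set" where
  "cantor_set = {x. \<exists>d :: nat \<Rightarrow> nat. (\<forall>i. d i \<in> {0, 2}) \<and>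
                      x = (\<Sum>i. real (d i) / 3 ^ (Suc i))}"

definition graph_on :: "real set \<Rightarrow> (real \<Rightarrow> real) \<Rightarrow> (real \<times> real) set" where
  "graph_on K h = {(x, h x) | x. x \<in> K}"

definition sep_number :: "nat \<Rightarrow> 'a::metric_space set \<Rightarrow> nat" where
  "sep_number n X = Sup {card S | S. finite S \<and> S \<subseteq> X \<and>
      (\<forall>x\<in>S. \<forall>y\<in>S. x \<noteq> y \<longrightarrow> dist x y > (1/2) ^ n)}"

definition upper_box_dim :: "'a::metric_space set \<Rightarrow> ereal" where
  "upper_box_dim X = limsup (\<lambda>n. ereal (ln (real (sep_number n X)) / (real n * ln 2)))"

end

theory Submission
  imports Defs
begin

text \<open>
  Write a point x of the Cantor set with ternary digits d(i) \<in> {0, 2} and let F_A x = sample_fn A x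
  be the point of the Cantor set whose m-th digit is d(4m) for m \<in> A and 0 otherwise. F_A is
  continuous, as its first k digits only depend on the first 4k digits of x. At scale 3^-k \<approx> 2^-n
  a point (x, F_A x) of the graph is determined by the digits d(i), i < k, together with d(4m) for
  m \<in> A, m < k. If A contains at most one of 2j and 2j + 1 for every j (the even or the odd
  numbers), this leaves about 2^(3k/2) separated points, so the upper box dimension of the graph
  is at most (3/2) log_3 2. For A = \<nat> the digits d(4m) with k/4 < m < k lie beyond the first k
  and are free, giving 2^(7k/4) separated points and dimension at least (7/4) log_3 2. Finally
  F_even + F_odd = F_\<nat>, since the two summands have their nonzero digits at disjoint places.
\<close>


definition separated :: "nat \<Rightarrow> 'a::metric_space set \<Rightarrow> bool" where
  "separated n S \<longleftrightarrow> (\<forall>x\<in>S. \<forall>y\<in>S. x \<noteq> y \<longrightarrow> dist x y > (1/2) ^ n)"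

lemma sep_number_eq:
  "sep_number n X = Sup {card S | S. finite S \<and> S \<subseteq> X \<and> separated n S}"
  by (simp add: sep_number_def separated_def)

lemma sep_number_le:
  assumes "\<And>S. finite S \<Longrightarrow> S \<subseteq> X \<Longrightarrow> separated n S \<Longrightarrow> card S \<le> B"
  shows "sep_number n X \<le> B"
  unfolding sep_number_eq
proof (rule cSup_least)
  show "{card S |S. finite S \<and> S \<subseteq> X \<and> separated n S} \<noteq> {}"
    by (auto intro!: exI[of _ "{}"] simp: separated_def)
next
  fix m assume "m \<in> {card S |S. finite S \<and> S \<subseteq> X \<and> separated n S}"
  then show "m \<le> B" using assms by auto
qed

lemma card_le_sep_number:
  assumes "finite S" "S \<subseteq> X" "separated n S"
    and "\<And>S. finite S \<Longrightarrow> S \<subseteq> X \<Longrightarrow> separated n S \<Longrightarrow> card S \<le> B"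
  shows "card S \<le> sep_number n X"
  unfolding sep_number_eq
proof (rule cSup_upper)
  show "bdd_above {card S |S. finite S \<and> S \<subseteq> X \<and> separated n S}"
    by (rule bdd_aboveI[of _ B]) (use assms(4) in auto)
  show "card S \<in> {card S |S. finite S \<and> S \<subseteq> X \<and> separated n S}"
    using assms(1-3) by auto
qed

lemma upper_box_dim_le:
  assumes "0 \<le> c" "eventually (\<lambda>n. real (sep_number n X) \<le> 2 powr (c * real n)) sequentially"
  shows "upper_box_dim X \<le> ereal c"
  unfolding upper_box_dim_def
proof (rule Limsup_bounded)
  have ratio_le: "ln (real N) / (real n * ln 2) \<le> c" if "n > 0" "real N \<le> 2 powr (c * real n)" for n N
  proof (cases "N = 0")
    case False
    then have "ln (real N) \<le> ln (2 powr (c * real n))"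
      using that(2) by (subst ln_le_cancel_iff) auto
    then have "ln (real N) \<le> c * real n * ln 2"
      by (simp add: ln_powr)
    then show ?thesis
      using that(1) by (simp add: divide_simps)
  qed (use assms(1) in simp)
  show "eventually (\<lambda>n. ereal (ln (real (sep_number n X)) / (real n * ln 2)) \<le> ereal c) sequentially"
    using eventually_conj[OF assms(2) eventually_gt_at_top[of 0]]
    by (rule eventually_mono) (simp add: ratio_le)
qed

lemma upper_box_dim_ge:
  assumes "eventually (\<lambda>n. 2 powr (c * real n) \<le> real (sep_number n X)) sequentially"
  shows "ereal c \<le> upper_box_dim X"
proof -
  have ratio_ge: "c \<le> ln (real N) / (real n * ln 2)" if "n > 0" "2 powr (c * real n) \<le> real N" for n N
  proof -
    have "c * real n * ln 2 \<le> ln (real N)"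
      using ln_mono[OF that(2)] by (simp add: ln_powr)
    then show ?thesis
      using that(1) by (simp add: divide_simps)
  qed
  have "eventually (\<lambda>n. ereal c \<le> ereal (ln (real (sep_number n X)) / (real n * ln 2))) sequentially"
    using eventually_conj[OF assms eventually_gt_at_top[of 0]]
    by (rule eventually_mono) (simp add: ratio_ge)
  then have "ereal c \<le> liminf (\<lambda>n. ereal (ln (real (sep_number n X)) / (real n * ln 2)))"
    by (rule Liminf_bounded)
  also have "\<dots> \<le> upper_box_dim X"
    unfolding upper_box_dim_def by (rule Liminf_le_Limsup) simp
  finally show ?thesis .
qed

definition cantor_digits :: "(nat \<Rightarrow> nat) \<Rightarrow> bool" where
  "cantor_digits d \<longleftrightarrow> (\<forall>i. d i \<in> {0, 2})"

definition ternary_value :: "(nat \<Rightarrow> nat) \<Rightarrow> real" where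
  "ternary_value d = (\<Sum>i. real (d i) / 3 ^ Suc i)"

lemma cantor_set_eq: "cantor_set = ternary_value ` {d. cantor_digits d}"
  by (auto simp: cantor_set_def cantor_digits_def ternary_value_def)

lemma ternary_value_in_cantor_set: "cantor_digits d \<Longrightarrow> ternary_value d \<in> cantor_set"
  by (simp add: cantor_set_eq)

lemma sums_two_thirds_tail: "(\<lambda>i. 2 / 3 ^ Suc (i + k) :: real) sums (1 / 3 ^ k)"
proof -
  have "(\<lambda>i. (2 / 3 ^ Suc k) * (1/3::real) ^ i) sums ((2 / 3 ^ Suc k) * (1 / (1 - 1/3)))"
    by (intro sums_mult geometric_sums) auto
  moreover have "(2 / 3 ^ Suc k) * (1/3::real) ^ i = 2 / 3 ^ Suc (i + k)" for i
    by (simp add: power_add power_one_over field_simps)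
  ultimately show ?thesis by simp
qed

lemma cantor_digits_diff_bound:
  assumes "cantor_digits d" "cantor_digits e"
  shows "\<bar>(real (d i) - real (e i)) / 3 ^ Suc i\<bar> \<le> 2 / 3 ^ Suc i"
proof -
  have "d i \<in> {0, 2}" "e i \<in> {0, 2}"
    using assms by (auto simp: cantor_digits_def)
  then show ?thesis by (auto simp: divide_simps)
qed

lemma summable_ternary_digits_diff:
  assumes "cantor_digits d" "cantor_digits e"
  shows "summable (\<lambda>i. (real (d i) - real (e i)) / 3 ^ Suc i)"
proof (rule summable_comparison_test')
  show "summable (\<lambda>i. 2 / 3 ^ Suc (i + 0) :: real)"
    using sums_two_thirds_tail[of 0] by (simp add: sums_iff)
qed (use cantor_digits_diff_bound[OF assms] in simp)

lemma summable_ternary_digits: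
  assumes "cantor_digits d"
  shows "summable (\<lambda>i. real (d i) / 3 ^ Suc i)"
  using summable_ternary_digits_diff[OF assms, of "\<lambda>_. 0"] by (simp add: cantor_digits_def)

lemma ternary_value_diff_split:
  assumes "cantor_digits d" "cantor_digits e"
  shows "ternary_value d - ternary_value e =
      (\<Sum>i. (real (d (i + k)) - real (e (i + k))) / 3 ^ Suc (i + k))
      + (\<Sum>i<k. (real (d i) - real (e i)) / 3 ^ Suc i)"
proof -
  have "ternary_value d - ternary_value e = (\<Sum>i. (real (d i) - real (e i)) / 3 ^ Suc i)"
    using suminf_diff[OF summable_ternary_digits[OF assms(1)] summable_ternary_digits[OF assms(2)]]
    by (simp add: ternary_value_def diff_divide_distrib)
  then show ?thesis
    using suminf_split_initial_segment[OF summable_ternary_digits_diff[OF assms]] by simp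
qed

lemma ternary_digits_tail_bound:
  assumes "cantor_digits d" "cantor_digits e"
  shows "\<bar>\<Sum>i. (real (d (i + k)) - real (e (i + k))) / 3 ^ Suc (i + k)\<bar> \<le> 1 / 3 ^ k"
proof -
  have "norm (\<Sum>i. (real (d (i + k)) - real (e (i + k))) / 3 ^ Suc (i + k))
      \<le> (\<Sum>i. 2 / 3 ^ Suc (i + k))"
    by (rule norm_suminf_le)
      (use cantor_digits_diff_bound[OF assms] sums_two_thirds_tail in \<open>auto simp: sums_iff\<close>)
  also have "\<dots> = 1 / 3 ^ k"
    using sums_two_thirds_tail sums_unique by metis
  finally show ?thesis by simp
qed

lemma ternary_value_dist_le:
  assumes "cantor_digits d" "cantor_digits e" "\<And>i. i < k \<Longrightarrow> d i = e i"
  shows "\<bar>ternary_value d - ternary_value e\<bar> \<le> 1 / 3 ^ k"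
  using ternary_value_diff_split[OF assms(1,2), of k] ternary_digits_tail_bound[OF assms(1,2), of k]
    assms(3) by simp

text \<open>Two digits 0 and 2 differing at the first place j contribute 2/3^(j+1), while the
  whole tail contributes at most 1/3^(j+1).\<close>
lemma ternary_value_dist_ge_first_diff:
  assumes "cantor_digits d" "cantor_digits e" "d j \<noteq> e j" "\<And>i. i < j \<Longrightarrow> d i = e i"
  shows "1 / 3 ^ Suc j \<le> \<bar>ternary_value d - ternary_value e\<bar>"
proof -
  have "(\<Sum>i<Suc j. (real (d i) - real (e i)) / 3 ^ Suc i) = (real (d j) - real (e j)) / 3 ^ Suc j"
    using assms(4) by simp
  moreover have "d j \<in> {0, 2}" "e j \<in> {0, 2}"
    using assms(1,2) by (auto simp: cantor_digits_def)
  then have "\<bar>(real (d j) - real (e j)) / 3 ^ Suc j\<bar> = 2 / 3 ^ Suc j"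
    using assms(3) by (auto simp: divide_simps)
  ultimately show ?thesis
    using ternary_value_diff_split[OF assms(1,2), of "Suc j"]
      ternary_digits_tail_bound[OF assms(1,2), of "Suc j"] by linarith
qed

lemma ternary_value_dist_ge:
  assumes "cantor_digits d" "cantor_digits e" "j < k" "d j \<noteq> e j"
  shows "1 / 3 ^ k \<le> \<bar>ternary_value d - ternary_value e\<bar>"
proof -
  obtain j0 where j0: "d j0 \<noteq> e j0" "\<And>i. i < j0 \<Longrightarrow> d i = e i"
    using exists_least_iff[of "\<lambda>j. d j \<noteq> e j"] assms(4) by blast
  have "j0 \<le> j"
    using j0(2) assms(4) by (meson not_le)
  then have "(3::real) ^ Suc j0 \<le> 3 ^ k"
    using assms(3) by (intro power_increasing) auto
  then have "1 / 3 ^ k \<le> (1 / 3 ^ Suc j0 :: real)"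
    by (simp add: divide_simps)
  also have "\<dots> \<le> \<bar>ternary_value d - ternary_value e\<bar>"
    by (rule ternary_value_dist_ge_first_diff[OF assms(1,2) j0])
  finally show ?thesis .
qed

lemma ternary_value_inj:
  assumes "cantor_digits d" "cantor_digits e" "ternary_value d = ternary_value e"
  shows "d = e"
proof (rule ccontr)
  assume "d \<noteq> e"
  then obtain j where "d j \<noteq> e j" by auto
  from ternary_value_dist_ge[OF assms(1,2) lessI this] assms(3) show False
    by (simp add: divide_simps)
qed

definition digits_of :: "real \<Rightarrow> nat \<Rightarrow> nat" where
  "digits_of x = (SOME d. cantor_digits d \<and> ternary_value d = x)"

lemma digits_of:
  assumes "x \<in> cantor_set"
  shows "cantor_digits (digits_of x)" "ternary_value (digits_of x) = x"
proof -
  have "\<exists>d. cantor_digits d \<and> ternary_value d = x"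
    using assms by (auto simp: cantor_set_eq)
  then have "cantor_digits (digits_of x) \<and> ternary_value (digits_of x) = x"
    unfolding digits_of_def by (rule someI_ex)
  then show "cantor_digits (digits_of x)" "ternary_value (digits_of x) = x" by auto
qed

lemma digits_of_ternary_value: "cantor_digits d \<Longrightarrow> digits_of (ternary_value d) = d"
  using digits_of[OF ternary_value_in_cantor_set] ternary_value_inj by blast

lemma digits_of_eq_if_close:
  assumes "x \<in> cantor_set" "y \<in> cantor_set" "\<bar>x - y\<bar> < 1 / 3 ^ k" "i < k"
  shows "digits_of x i = digits_of y i"
  using ternary_value_dist_ge[OF digits_of(1)[OF assms(1)] digits_of(1)[OF assms(2)] assms(4)]
    digits_of(2) assms by fastforce

definition sampled_digits :: "nat set \<Rightarrow> real \<Rightarrow> nat \<Rightarrow> nat" where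
  "sampled_digits A x m = (if m \<in> A then digits_of x (4 * m) else 0)"

definition sample_fn :: "nat set \<Rightarrow> real \<Rightarrow> real" where
  "sample_fn A x = ternary_value (sampled_digits A x)"

lemma cantor_digits_sampled: "x \<in> cantor_set \<Longrightarrow> cantor_digits (sampled_digits A x)"
  using digits_of(1)[of x] by (auto simp: cantor_digits_def sampled_digits_def)

lemma sample_fn_dist_le:
  assumes "x \<in> cantor_set" "y \<in> cantor_set" "\<bar>x - y\<bar> < 1 / 3 ^ (4 * k)"
  shows "\<bar>sample_fn A x - sample_fn A y\<bar> \<le> 1 / 3 ^ k"
  unfolding sample_fn_def
proof (rule ternary_value_dist_le[OF cantor_digits_sampled[OF assms(1)] cantor_digits_sampled[OF assms(2)]])
  show "sampled_digits A x i = sampled_digits A y i" if "i < k" for i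
    using digits_of_eq_if_close[OF assms, of "4 * i"] that by (simp add: sampled_digits_def)
qed

lemma continuous_on_sample_fn: "continuous_on cantor_set (sample_fn A)"
  unfolding continuous_on_iff
proof (intro ballI allI impI)
  fix x e :: real
  assume x: "x \<in> cantor_set" and e: "0 < e"
  obtain k where k: "(1/3::real) ^ k < e"
    using real_arch_pow_inv[OF e, of "1/3"] by auto
  show "\<exists>d>0. \<forall>y\<in>cantor_set. dist y x < d \<longrightarrow> dist (sample_fn A y) (sample_fn A x) < e"
  proof (intro exI[of _ "1 / 3 ^ (4 * k)"] conjI ballI impI)
    fix y assume "y \<in> cantor_set" "dist y x < 1 / 3 ^ (4 * k)"
    then have "\<bar>sample_fn A y - sample_fn A x\<bar> \<le> 1 / 3 ^ k"
      using sample_fn_dist_le[OF _ x] by (simp add: dist_real_def)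
    then show "dist (sample_fn A y) (sample_fn A x) < e"
      using k by (simp add: dist_real_def power_one_over)
  qed simp
qed

lemma sample_fn_Un:
  assumes "x \<in> cantor_set" "A \<inter> B = {}"
  shows "sample_fn A x + sample_fn B x = sample_fn (A \<union> B) x"
proof -
  have "sample_fn A x + sample_fn B x =
      (\<Sum>i. real (sampled_digits A x i) / 3 ^ Suc i + real (sampled_digits B x i) / 3 ^ Suc i)"
    unfolding sample_fn_def ternary_value_def
    by (intro suminf_add summable_ternary_digits cantor_digits_sampled assms(1))
  also have "\<dots> = sample_fn (A \<union> B) x"
    unfolding sample_fn_def ternary_value_def
    by (rule suminf_cong) (use assms(2) in \<open>auto simp: sampled_digits_def add_divide_distrib\<close>)
  finally show ?thesis .
qed

lemma dist_le_abs_add_abs: "dist (a, b) (c, d) \<le> \<bar>a - c\<bar> + \<bar>b - d\<bar>" for a b c d :: real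
  unfolding dist_Pair_Pair dist_real_def using sqrt_sum_squares_le_sum_abs by simp

lemma dist_graph_sample_fn_le:
  assumes "x \<in> cantor_set" "y \<in> cantor_set"
    and low: "\<And>i. i < k \<Longrightarrow> digits_of x i = digits_of y i"
    and sampled: "\<And>m. m < k \<Longrightarrow> m \<in> A \<Longrightarrow> digits_of x (4 * m) = digits_of y (4 * m)"
  shows "dist (x, sample_fn A x) (y, sample_fn A y) \<le> 2 / 3 ^ k"
proof -
  have "\<bar>x - y\<bar> \<le> 1 / 3 ^ k"
    using ternary_value_dist_le[OF digits_of(1)[OF assms(1)] digits_of(1)[OF assms(2)] low]
    by (simp add: digits_of(2) assms(1,2))
  moreover have "\<bar>sample_fn A x - sample_fn A y\<bar> \<le> 1 / 3 ^ k"
    unfolding sample_fn_def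
    by (rule ternary_value_dist_le[OF cantor_digits_sampled[OF assms(1)] cantor_digits_sampled[OF assms(2)]])
      (simp add: sampled_digits_def sampled)
  ultimately show ?thesis
    using dist_le_abs_add_abs[of x "sample_fn A x" y "sample_fn A y"] by simp
qed

lemma card_separated_graph_sample_fn_le:
  assumes "2 / 3 ^ k \<le> (1/2::real) ^ n"
    and S: "finite S" "S \<subseteq> graph_on cantor_set (sample_fn A)" "separated n S"
  shows "card S \<le> 2 ^ (k + card ({..<k} \<inter> A))"
proof -
  define I where "I = {..<k} \<union> (\<lambda>m. 4 * m) ` ({..<k} \<inter> A)"
  define twos where "twos p = {i \<in> I. digits_of (fst p) i = 2}" for p :: "real \<times> real"
  have "inj_on twos S"
  proof (rule inj_onI)
    fix p q assume p: "p \<in> S" and q: "q \<in> S" and eq: "twos p = twos q"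
    obtain x y where x: "x \<in> cantor_set" "p = (x, sample_fn A x)"
      and y: "y \<in> cantor_set" "q = (y, sample_fn A y)"
      using p q S(2) unfolding graph_on_def by blast
    have agree: "digits_of x i = digits_of y i" if "i \<in> I" for i
    proof -
      have "digits_of x i \<in> {0, 2}" "digits_of y i \<in> {0, 2}"
        using digits_of(1)[OF x(1)] digits_of(1)[OF y(1)] by (auto simp: cantor_digits_def)
      moreover have "digits_of x i = 2 \<longleftrightarrow> digits_of y i = 2"
        using eq that x(2) y(2) unfolding twos_def by (simp add: set_eq_iff) blast
      ultimately show ?thesis by auto
    qed
    have "dist p q \<le> 2 / 3 ^ k"
      unfolding x(2) y(2) by (rule dist_graph_sample_fn_le[OF x(1) y(1)]) (simp_all add: agree I_def)
    then show "p = q"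
      using S(3) p q assms(1) unfolding separated_def by force
  qed
  then have "card S \<le> card (Pow I)"
    by (intro card_inj_on_le) (auto simp: I_def twos_def)
  also have "\<dots> \<le> 2 ^ (k + card ({..<k} \<inter> A))"
  proof -
    have "card I \<le> card {..<k} + card ((\<lambda>m. 4 * m) ` ({..<k} \<inter> A))"
      unfolding I_def by (rule card_Un_le)
    also have "\<dots> \<le> k + card ({..<k} \<inter> A)"
      using card_image_le[of "{..<k} \<inter> A" "\<lambda>m. 4 * m"] by simp
    finally show ?thesis
      by (simp add: I_def card_Pow power_increasing)
  qed
  finally show ?thesis .
qed

lemma sep_number_graph_sample_fn_le:
  assumes "2 / 3 ^ k \<le> (1/2::real) ^ n"
  shows "sep_number n (graph_on cantor_set (sample_fn A)) \<le> 2 ^ (k + card ({..<k} \<inter> A))"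
  by (rule sep_number_le) (rule card_separated_graph_sample_fn_le[OF assms])

lemma ex_two_thirds_pow_le: "\<exists>k. 2 / 3 ^ k \<le> (1/2::real) ^ n"
proof -
  obtain k where "(1/3::real) ^ k < (1/2) ^ n / 2"
    using real_arch_pow_inv[of "(1/2) ^ n / 2" "1/3"] by auto
  then have "2 / 3 ^ k \<le> (1/2::real) ^ n"
    by (simp add: power_one_over field_simps)
  then show ?thesis ..
qed

definition twos_on :: "nat set \<Rightarrow> nat \<Rightarrow> nat" where
  "twos_on T i = (if i \<in> T then 2 else 0)"

lemma cantor_digits_twos_on: "cantor_digits (twos_on T)"
  by (simp add: cantor_digits_def twos_on_def)

lemma sampled_digits_twos_on:
  "sampled_digits A (ternary_value (twos_on T)) m = (if m \<in> A then twos_on T (4 * m) else 0)"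
  by (simp add: sampled_digits_def digits_of_ternary_value[OF cantor_digits_twos_on])

lemma dist_graph_sample_fn_twos_on_ge:
  assumes "i \<in> T \<longleftrightarrow> i \<notin> T'" and "i < k \<or> (\<exists>m\<in>A. m < k \<and> i = 4 * m)"
  shows "1 / 3 ^ k \<le> dist (ternary_value (twos_on T), sample_fn A (ternary_value (twos_on T)))
                            (ternary_value (twos_on T'), sample_fn A (ternary_value (twos_on T')))"
    (is "_ \<le> dist ?p ?q")
proof -
  have diff: "twos_on T i \<noteq> twos_on T' i"
    using assms(1) by (auto simp: twos_on_def)
  from assms(2) show ?thesis
  proof
    assume "i < k"
    have "1 / 3 ^ k \<le> \<bar>ternary_value (twos_on T) - ternary_value (twos_on T')\<bar>"
      by (rule ternary_value_dist_ge[OF cantor_digits_twos_on cantor_digits_twos_on \<open>i < k\<close> diff])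
    also have "\<dots> \<le> dist ?p ?q"
      using dist_fst_le[of ?p ?q] by (simp add: dist_real_def)
    finally show ?thesis .
  next
    assume "\<exists>m\<in>A. m < k \<and> i = 4 * m"
    then obtain m where m: "m \<in> A" "m < k" "i = 4 * m" by blast
    have "1 / 3 ^ k \<le> \<bar>sample_fn A (ternary_value (twos_on T)) - sample_fn A (ternary_value (twos_on T'))\<bar>"
      unfolding sample_fn_def
      by (rule ternary_value_dist_ge[OF _ _ m(2)])
        (use diff m in \<open>auto simp: sampled_digits_twos_on cantor_digits_sampled
          ternary_value_in_cantor_set cantor_digits_twos_on\<close>)
    also have "\<dots> \<le> dist ?p ?q"
      using dist_snd_le[of ?p ?q] by (simp add: dist_real_def)
    finally show ?thesis .
  qed
qed

text \<open>For k/4 < m < k the sampled positions 4m lie beyond k, so the digits below k and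
  the sampled digits can be chosen independently.\<close>
lemma ex_separated_graph_sample_fn:
  assumes "(1/2::real) ^ n < 1 / 3 ^ k"
  obtains S where "finite S" "S \<subseteq> graph_on cantor_set (sample_fn A)" "separated n S"
    "card S = 2 ^ (k + card (A \<inter> {k div 4<..<k}))"
proof -
  define M where "M = A \<inter> {k div 4<..<k}"
  define J where "J = {..<k} \<union> (\<lambda>m. 4 * m) ` M"
  define P where "P T = (ternary_value (twos_on T), sample_fn A (ternary_value (twos_on T)))" for T
  have far: "1 / 3 ^ k \<le> dist (P T) (P T')" if "T \<subseteq> J" "T' \<subseteq> J" "T \<noteq> T'" for T T'
  proof -
    obtain i where "i \<in> T \<longleftrightarrow> i \<notin> T'"
      using \<open>T \<noteq> T'\<close> by blast
    moreover from this have "i < k \<or> (\<exists>m\<in>A. m < k \<and> i = 4 * m)"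
      using \<open>T \<subseteq> J\<close> \<open>T' \<subseteq> J\<close> by (auto simp: J_def M_def)
    ultimately show ?thesis
      unfolding P_def by (rule dist_graph_sample_fn_twos_on_ge)
  qed
  have inj: "inj_on P (Pow J)"
  proof (rule inj_onI, rule ccontr)
    fix T T' assume "T \<in> Pow J" "T' \<in> Pow J" "P T = P T'" "T \<noteq> T'"
    with far[of T T'] show False by (simp add: power_le_zero_eq)
  qed
  have "k \<le> 4 * m" if "m \<in> M" for m
  proof -
    have "k div 4 < m" using that by (simp add: M_def)
    moreover have "k < 4 * (k div 4 + 1)" by presburger
    ultimately show ?thesis by linarith
  qed
  then have "{..<k} \<inter> (\<lambda>m. 4 * m) ` M = {}"
    by force
  moreover have "card ((\<lambda>m. 4 * m) ` M) = card M"
    by (rule card_image) (simp add: inj_on_def)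
  ultimately have "card J = k + card M"
    unfolding J_def by (simp add: card_Un_disjoint M_def)
  show ?thesis
  proof
    show "finite (P ` Pow J)" by (simp add: J_def M_def)
    show "P ` Pow J \<subseteq> graph_on cantor_set (sample_fn A)"
      using ternary_value_in_cantor_set[OF cantor_digits_twos_on] by (auto simp: P_def graph_on_def)
    show "separated n (P ` Pow J)"
      unfolding separated_def
    proof (intro ballI impI)
      fix p q assume "p \<in> P ` Pow J" "q \<in> P ` Pow J" "p \<noteq> q"
      then obtain T T' where "T \<subseteq> J" "T' \<subseteq> J" "T \<noteq> T'" "p = P T" "q = P T'"
        by blast
      then have "1 / 3 ^ k \<le> dist p q"
        using far by blast
      then show "(1/2) ^ n < dist p q"
        using assms by linarith
    qed
    show "card (P ` Pow J) = 2 ^ (k + card (A \<inter> {k div 4<..<k}))"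
      using card_image[OF inj] \<open>card J = k + card M\<close> by (simp add: card_Pow J_def M_def)
  qed
qed

lemma sep_number_graph_sample_fn_ge:
  assumes "(1/2::real) ^ n < 1 / 3 ^ k"
  shows "2 ^ (k + card (A \<inter> {k div 4<..<k})) \<le> sep_number n (graph_on cantor_set (sample_fn A))"
proof -
  obtain S where S: "finite S" "S \<subseteq> graph_on cantor_set (sample_fn A)" "separated n S"
    "card S = 2 ^ (k + card (A \<inter> {k div 4<..<k}))"
    using ex_separated_graph_sample_fn[OF assms] .
  obtain k0 where "2 / 3 ^ k0 \<le> (1/2::real) ^ n"
    using ex_two_thirds_pow_le by blast
  from card_le_sep_number[OF S(1-3) card_separated_graph_sample_fn_le[OF this]] S(4)
  show ?thesis by simp
qed

lemma eventually_le_real_mult: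
  assumes "0 < (c::real)"
  shows "eventually (\<lambda>n. C \<le> real n * c) sequentially"
proof -
  obtain N :: nat where "C / c < real N"
    using reals_Archimedean2 by blast
  then have "C \<le> real n * c" if "N \<le> n" for n
  proof -
    have "C / c < real n"
      using \<open>C / c < real N\<close> that by linarith
    then show ?thesis
      using assms by (simp add: pos_divide_less_eq)
  qed
  then show ?thesis
    unfolding eventually_sequentially by blast
qed

lemma pow_two_le_pow_three_iff: "(2::real) ^ n \<le> 3 ^ k \<longleftrightarrow> real n * log 3 2 \<le> real k"
proof -
  have "(2::real) ^ n \<le> 3 ^ k \<longleftrightarrow> real n * ln 2 \<le> real k * ln 3"
    by (subst ln_le_cancel_iff[symmetric]) (simp_all add: ln_realpow)
  also have "\<dots> \<longleftrightarrow> real n * log 3 2 \<le> real k"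
    by (simp add: log_def field_simps)
  finally show ?thesis .
qed

lemma le_two_powr_if_le_two_pow:
  assumes "N \<le> 2 ^ m" "real m \<le> x"
  shows "real N \<le> 2 powr x"
proof -
  have "real N \<le> 2 powr real m"
    using assms(1) by (simp add: powr_realpow flip: of_nat_le_iff)
  also have "\<dots> \<le> 2 powr x"
    using assms(2) by simp
  finally show ?thesis .
qed

lemma two_powr_le_if_two_pow_le:
  assumes "2 ^ m \<le> N" "x \<le> real m"
  shows "2 powr x \<le> real N"
proof -
  have "2 powr x \<le> 2 powr real m"
    using assms(2) by simp
  also have "\<dots> \<le> real N"
    using assms(1) by (simp add: powr_realpow flip: of_nat_le_iff)
  finally show ?thesis .
qed

lemma card_lessThan_Int_le_half:
  assumes "inj_on (\<lambda>m. m div 2) A"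
  shows "card ({..<k} \<inter> A) \<le> (k + 1) div 2"
proof -
  have "card ({..<k} \<inter> A) \<le> card {..<(k + 1) div 2}"
    by (rule card_inj_on_le[of "\<lambda>m. m div 2"]) (use inj_on_subset[OF assms] in auto)
  then show ?thesis by simp
qed

lemma sep_number_graph_sample_fn_le_powr:
  assumes "inj_on (\<lambda>m. m div 2) A" and large: "35 \<le> real n * log 3 2"
  shows "real (sep_number n (graph_on cantor_set (sample_fn A))) \<le> 2 powr (8/5 * log 3 2 * real n)"
proof -
  define k where "k = nat \<lceil>real n * log 3 2\<rceil> + 1"
  have k: "real n * log 3 2 \<le> real (k - 1)" "real k \<le> real n * log 3 2 + 2"
    unfolding k_def using large ceiling_correct[of "real n * log 3 2"] by simp_all
  have "(2::real) ^ n \<le> 3 ^ (k - 1)"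
    unfolding pow_two_le_pow_three_iff using k(1) .
  moreover have "(3::real) ^ k = 3 * 3 ^ (k - 1)"
    by (simp add: k_def)
  moreover have "(0::real) \<le> 3 ^ (k - 1)"
    by simp
  ultimately have "2 * 2 ^ n \<le> (3::real) ^ k"
    by linarith
  then have "2 / 3 ^ k \<le> (1/2::real) ^ n"
    by (simp add: power_one_over field_simps)
  then have "sep_number n (graph_on cantor_set (sample_fn A)) \<le> 2 ^ (k + card ({..<k} \<inter> A))"
    by (rule sep_number_graph_sample_fn_le)
  moreover have "real (k + card ({..<k} \<inter> A)) \<le> 8/5 * log 3 2 * real n"
  proof -
    have "real (card ({..<k} \<inter> A)) \<le> real ((k + 1) div 2)"
      using card_lessThan_Int_le_half[OF assms(1), of k] by (simp only: of_nat_le_iff)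
    also have "\<dots> \<le> real k / 2 + 1/2"
      using of_nat_div_le_of_nat[of "k + 1" 2] by simp
    finally have "real (card ({..<k} \<inter> A)) \<le> real k / 2 + 1/2" .
    moreover have "8/5 * log 3 2 * real n = 8/5 * (real n * log 3 2)"
      by simp
    ultimately show ?thesis
      unfolding of_nat_add using k(2) large by linarith
  qed
  ultimately show ?thesis
    by (rule le_two_powr_if_le_two_pow)
qed

lemma upper_box_dim_graph_sample_fn_le:
  assumes "inj_on (\<lambda>m. m div 2) A"
  shows "upper_box_dim (graph_on cantor_set (sample_fn A)) \<le> ereal (8/5 * log 3 2)"
proof (rule upper_box_dim_le)
  have "eventually (\<lambda>n. 35 \<le> real n * log 3 2) sequentially"
    by (rule eventually_le_real_mult) simp
  then show "eventually (\<lambda>n. real (sep_number n (graph_on cantor_set (sample_fn A)))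
      \<le> 2 powr (8/5 * log 3 2 * real n)) sequentially"
    by (rule eventually_mono) (erule sep_number_graph_sample_fn_le_powr[OF assms])
qed simp

lemma sep_number_graph_sample_fn_UNIV_ge_powr:
  assumes large: "55 \<le> real n * log 3 2"
  shows "2 powr (17/10 * log 3 2 * real n) \<le> real (sep_number n (graph_on cantor_set (sample_fn UNIV)))"
proof -
  define k where "k = nat (\<lceil>real n * log 3 2\<rceil> - 1)"
  have "real k = of_int \<lceil>real n * log 3 2\<rceil> - 1"
    unfolding k_def using large by simp
  then have k: "real k < real n * log 3 2" "real n * log 3 2 - 1 \<le> real k"
    using ceiling_correct[of "real n * log 3 2"] by linarith+
  have "\<not> (2::real) ^ n \<le> 3 ^ k"
    unfolding pow_two_le_pow_three_iff using k(1) by linarith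
  then have "(1/2::real) ^ n < 1 / 3 ^ k"
    by (simp add: power_one_over field_simps)
  then have "2 ^ (k + card (UNIV \<inter> {k div 4<..<k})) \<le> sep_number n (graph_on cantor_set (sample_fn UNIV))"
    by (rule sep_number_graph_sample_fn_ge)
  moreover have "17/10 * log 3 2 * real n \<le> real (k + card (UNIV \<inter> {k div 4<..<k}))"
  proof -
    have "4 * (k div 4) \<le> k" "k div 4 < k"
      using k large by linarith+
    then have "7/4 * real k - 1 \<le> real (k + card (UNIV \<inter> {k div 4<..<k}))"
      by (simp add: of_nat_diff)
    moreover have "17/10 * log 3 2 * real n = 17/10 * (real n * log 3 2)"
      by simp
    ultimately show ?thesis
      using k large by linarith
  qed
  ultimately show ?thesis
    by (rule two_powr_le_if_two_pow_le)
qed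

lemma upper_box_dim_graph_sample_fn_UNIV_ge:
  "ereal (17/10 * log 3 2) \<le> upper_box_dim (graph_on cantor_set (sample_fn UNIV))"
proof (rule upper_box_dim_ge)
  have "eventually (\<lambda>n. 55 \<le> real n * log 3 2) sequentially"
    by (rule eventually_le_real_mult) simp
  then show "eventually (\<lambda>n. 2 powr (17/10 * log 3 2 * real n)
      \<le> real (sep_number n (graph_on cantor_set (sample_fn UNIV)))) sequentially"
    by (rule eventually_mono) (erule sep_number_graph_sample_fn_UNIV_ge_powr)
qed

lemma graph_on_cong: "(\<And>x. x \<in> K \<Longrightarrow> f x = g x) \<Longrightarrow> graph_on K f = graph_on K g"
  unfolding graph_on_def by force

theorem theorem1p9:
  shows "\<exists>f g :: real \<Rightarrow> real. continuous_on cantor_set f \<and> continuous_on cantor_set g \<and>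
    upper_box_dim (graph_on cantor_set (\<lambda>x. f x + g x)) >
      max (upper_box_dim (graph_on cantor_set f)) (upper_box_dim (graph_on cantor_set g))"
proof (intro exI conjI)
  let ?E = "{m :: nat. even m}" and ?O = "{m :: nat. odd m}"
  have sum_graph: "graph_on cantor_set (\<lambda>x. sample_fn ?E x + sample_fn ?O x) = graph_on cantor_set (sample_fn UNIV)"
  proof (rule graph_on_cong)
    have "?E \<inter> ?O = {}" "?E \<union> ?O = UNIV"
      by auto
    then show "sample_fn ?E x + sample_fn ?O x = sample_fn UNIV x" if "x \<in> cantor_set" for x
      using sample_fn_Un[OF that, of ?E ?O] by simp
  qed
  have "ereal (8/5 * log 3 2) < ereal (17/10 * log 3 2)"
    by simp
  then have "ereal (8/5 * log 3 2) < upper_box_dim (graph_on cantor_set (\<lambda>x. sample_fn ?E x + sample_fn ?O x))"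
    unfolding sum_graph using upper_box_dim_graph_sample_fn_UNIV_ge by (rule less_le_trans)
  moreover have "inj_on (\<lambda>m. m div 2) ?E" "inj_on (\<lambda>m. m div 2) ?O"
    by (auto simp: inj_on_def elim!: evenE oddE)
  ultimately show "max (upper_box_dim (graph_on cantor_set (sample_fn ?E))) (upper_box_dim (graph_on cantor_set (sample_fn ?O)))
      < upper_box_dim (graph_on cantor_set (\<lambda>x. sample_fn ?E x + sample_fn ?O x))"
    unfolding max_less_iff_conj using upper_box_dim_graph_sample_fn_le le_less_trans by blast
qed (rule continuous_on_sample_fn)+

end
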